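(* Let $T$ be a $\delta$-Jordan Lie supertriple system and $(V,\theta)$ a representation of $T$. Then $T\oplus V$, with degree $|(a,u)|=|a|$ and the triple product $$[(a,u),(b,v),(c,w)]=\big([a,b,c],\ (-1)^{|a|(|b|+|c|)}\theta(b,c)(u)-\delta(-1)^{|b||c|}\theta(a,c)(v)+\delta D(a,b)(w)\big),$$ is a $\delta$-Jordan Lie supertriple system.
   Context: A $\delta$-Jordan Lie supertriple system ($\delta\in\{1,-1\}$) is a $\mathbb{Z}_2$-graded vector space $T=T_{\bar 0}\oplus T_{\bar 1}$ with a trilinear product $[\cdot,\cdot,\cdot]$ such that, for all homogeneous $a,b,c,d,e$ (with $|a|$ the degree of $a$): $|[a,b,c]|=|a|+|b|+|c|$; $[b,a,c]=-\delta(-1)^{|a||b|}[a,b,c]$; $(-1)^{|a||c|}[a,b,c]+(-1)^{|b||a|}[b,c,a]+(-1)^{|c||b|}[c,a,b]=0$; and $[a,b,[c,d,e]]=[[a,b,c],d,e]+(-1)^{|c|(|a|+|b|)}[c,[a,b,d],e]+\delta(-1)^{(|a|+|b|)(|c|+|d|)}[c,d,[a,b,e]]$. A representation of $T$ is a pair $(V,\theta)$ where $V$ is a $\mathbb{Z}_2$-graded vector space and $\theta:T\otimes T\to End(V)$ is bilinear such that, writing $D(a,b)=(-1)^{|a||b|}\theta(b,a)-\delta\theta(a,b)$, for all homogeneous $a,b,c,d\in T$: (R1) $(-1)^{(|a|+|b|)(|c|+|d|)}\theta(c,d)\theta(a,b)-\delta(-1)^{|a||b|+|d|(|c|+|a|)}\theta(b,d)\theta(a,c)-\theta(a,[b,c,d])+(-1)^{|a|(|b|+|c|)}D(b,c)\theta(a,d)=0$;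 (R2) $\delta(-1)^{(|a|+|b|)(|c|+|d|)}\theta(c,d)D(a,b)-\delta D(a,b)\theta(c,d)+\theta([a,b,c],d)+\delta(-1)^{|c|(|a|+|b|)}\theta(c,[a,b,d])=0$; (R3) $D([a,b,c],d)+(-1)^{|c|(|a|+|b|)}D(c,[a,b,d])-\delta D(a,b)D(c,d)+(-1)^{(|a|+|b|)(|c|+|d|)}D(c,d)D(a,b)=0$. *)

theory Defs
  imports Complex_Main "HOL-Library.Product_Plus"
begin

text \<open>Degrees are natural numbers read modulo 2.\<close>

definition Gr :: "'a set \<Rightarrow> 'a set \<Rightarrow> nat \<Rightarrow> 'a set" where
  "Gr A0 A1 d = (if even d then A0 else A1)"

definition graded_space :: "('k::field \<Rightarrow> 'a::ab_group_add \<Rightarrow> 'a) \<Rightarrow> 'a set \<Rightarrow> 'a set \<Rightarrow> bool" where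
  "graded_space s A0 A1 \<longleftrightarrow>
     vector_space s \<and> module.subspace s A0 \<and> module.subspace s A1 \<and>
     (\<forall>x. \<exists>!p. fst p \<in> A0 \<and> snd p \<in> A1 \<and> x = fst p + snd p)"

definition gproj :: "'a set \<Rightarrow> 'a set \<Rightarrow> nat \<Rightarrow> 'a::ab_group_add \<Rightarrow> 'a" where
  "gproj A0 A1 i x = (THE y. y \<in> Gr A0 A1 i \<and> x - y \<in> Gr A0 A1 (Suc i))"

definition trilinear :: "('k::field \<Rightarrow> 'a::ab_group_add \<Rightarrow> 'a) \<Rightarrow> ('a \<Rightarrow> 'a \<Rightarrow> 'a \<Rightarrow> 'a) \<Rightarrow> bool" where
  "trilinear s p \<longleftrightarrow>
     (\<forall>b c. Vector_Spaces.linear s s (\<lambda>a. p a b c)) \<and>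
     (\<forall>a c. Vector_Spaces.linear s s (\<lambda>b. p a b c)) \<and>
     (\<forall>a b. Vector_Spaces.linear s s (\<lambda>c. p a b c))"

definition JLSTS :: "('k::field \<Rightarrow> 'a::ab_group_add \<Rightarrow> 'a) \<Rightarrow> 'a set \<Rightarrow> 'a set \<Rightarrow> 'k
    \<Rightarrow> ('a \<Rightarrow> 'a \<Rightarrow> 'a \<Rightarrow> 'a) \<Rightarrow> bool" where
  "JLSTS s A0 A1 \<delta> p \<longleftrightarrow>
     graded_space s A0 A1 \<and> (\<delta> = 1 \<or> \<delta> = -1) \<and> trilinear s p \<and>
     (\<forall>a b c da db dc. a \<in> Gr A0 A1 da \<longrightarrow> b \<in> Gr A0 A1 db \<longrightarrow> c \<in> Gr A0 A1 dc \<longrightarrow>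
        p a b c \<in> Gr A0 A1 (da + db + dc) \<and>
        p b a c = s (- \<delta> * (-1) ^ (da * db)) (p a b c) \<and>
        s ((-1) ^ (da * dc)) (p a b c) + s ((-1) ^ (db * da)) (p b c a)
          + s ((-1) ^ (dc * db)) (p c a b) = 0) \<and>
     (\<forall>a b c d e da db dc dd de. a \<in> Gr A0 A1 da \<longrightarrow> b \<in> Gr A0 A1 db \<longrightarrow>
        c \<in> Gr A0 A1 dc \<longrightarrow> d \<in> Gr A0 A1 dd \<longrightarrow> e \<in> Gr A0 A1 de \<longrightarrow>
        p a b (p c d e) = p (p a b c) d e + s ((-1) ^ (dc * (da + db))) (p c (p a b d) e)
          + s (\<delta> * (-1) ^ ((da + db) * (dc + dd))) (p c d (p a b e)))"

definition Dop :: "('k::field \<Rightarrow> 'v::ab_group_add \<Rightarrow> 'v) \<Rightarrow> 'k \<Rightarrow> ('a \<Rightarrow> 'a \<Rightarrow> 'v \<Rightarrow> 'v)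
    \<Rightarrow> 'a \<Rightarrow> 'a \<Rightarrow> nat \<Rightarrow> nat \<Rightarrow> 'v \<Rightarrow> 'v" where
  "Dop sV \<delta> \<theta> a b da db = (\<lambda>u. sV ((-1) ^ (da * db)) (\<theta> b a u) - sV \<delta> (\<theta> a b u))"

definition jl_representation ::
  "('k::field \<Rightarrow> 'a::ab_group_add \<Rightarrow> 'a) \<Rightarrow> 'a set \<Rightarrow> 'a set \<Rightarrow> 'k \<Rightarrow> ('a \<Rightarrow> 'a \<Rightarrow> 'a \<Rightarrow> 'a)
   \<Rightarrow> ('k \<Rightarrow> 'v::ab_group_add \<Rightarrow> 'v) \<Rightarrow> 'v set \<Rightarrow> 'v set \<Rightarrow> ('a \<Rightarrow> 'a \<Rightarrow> 'v \<Rightarrow> 'v) \<Rightarrow> bool" where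
  "jl_representation s A0 A1 \<delta> p sV V0 V1 \<theta> \<longleftrightarrow>
     graded_space sV V0 V1 \<and>
     (\<forall>b u. Vector_Spaces.linear s sV (\<lambda>a. \<theta> a b u)) \<and>
     (\<forall>a u. Vector_Spaces.linear s sV (\<lambda>b. \<theta> a b u)) \<and>
     (\<forall>a b. Vector_Spaces.linear sV sV (\<theta> a b)) \<and>
     (\<forall>a b u da db du. a \<in> Gr A0 A1 da \<longrightarrow> b \<in> Gr A0 A1 db \<longrightarrow> u \<in> Gr V0 V1 du \<longrightarrow>
        \<theta> a b u \<in> Gr V0 V1 (da + db + du)) \<and>
     (\<forall>a b c d da db dc dd u. a \<in> Gr A0 A1 da \<longrightarrow> b \<in> Gr A0 A1 db \<longrightarrow>
        c \<in> Gr A0 A1 dc \<longrightarrow> d \<in> Gr A0 A1 dd \<longrightarrow>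
        \<comment> \<open>(R1)\<close>
        sV ((-1) ^ ((da + db) * (dc + dd))) (\<theta> c d (\<theta> a b u))
          - sV (\<delta> * (-1) ^ (da * db + dd * (dc + da))) (\<theta> b d (\<theta> a c u))
          - \<theta> a (p b c d) u
          + sV ((-1) ^ (da * (db + dc))) (Dop sV \<delta> \<theta> b c db dc (\<theta> a d u)) = 0 \<and>
        \<comment> \<open>(R2)\<close>
        sV (\<delta> * (-1) ^ ((da + db) * (dc + dd))) (\<theta> c d (Dop sV \<delta> \<theta> a b da db u))
          - sV \<delta> (Dop sV \<delta> \<theta> a b da db (\<theta> c d u))
          + \<theta> (p a b c) d u
          + sV (\<delta> * (-1) ^ (dc * (da + db))) (\<theta> c (p a b d) u) = 0 \<and>
        \<comment> \<open>(R3)\<close>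
        Dop sV \<delta> \<theta> (p a b c) d (da + db + dc) dd u
          + sV ((-1) ^ (dc * (da + db))) (Dop sV \<delta> \<theta> c (p a b d) dc (da + db + dd) u)
          - sV \<delta> (Dop sV \<delta> \<theta> a b da db (Dop sV \<delta> \<theta> c d dc dd u))
          + sV ((-1) ^ ((da + db) * (dc + dd))) (Dop sV \<delta> \<theta> c d dc dd (Dop sV \<delta> \<theta> a b da db u)) = 0)"

definition prod_scale :: "('k \<Rightarrow> 'a \<Rightarrow> 'a) \<Rightarrow> ('k \<Rightarrow> 'v \<Rightarrow> 'v) \<Rightarrow> 'k \<Rightarrow> 'a \<times> 'v \<Rightarrow> 'a \<times> 'v" where
  "prod_scale s sV k x = (s k (fst x), sV k (snd x))"

text \<open>The triple product on homogeneous elements (a,u),(b,v),(c,w) of degrees da, db, dc.\<close>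
definition sd_hom ::
  "('k::field \<Rightarrow> 'v::ab_group_add \<Rightarrow> 'v) \<Rightarrow> 'k \<Rightarrow> ('a \<Rightarrow> 'a \<Rightarrow> 'a \<Rightarrow> 'a) \<Rightarrow> ('a \<Rightarrow> 'a \<Rightarrow> 'v \<Rightarrow> 'v)
   \<Rightarrow> 'a \<times> 'v \<Rightarrow> 'a \<times> 'v \<Rightarrow> 'a \<times> 'v \<Rightarrow> nat \<Rightarrow> nat \<Rightarrow> nat \<Rightarrow> 'a \<times> 'v" where
  "sd_hom sV \<delta> p \<theta> x y z da db dc =
     (case x of (a, u) \<Rightarrow> case y of (b, v) \<Rightarrow> case z of (c, w) \<Rightarrow>
       (p a b c,
        sV ((-1) ^ (da * (db + dc))) (\<theta> b c u)
        - sV (\<delta> * (-1) ^ (db * dc)) (\<theta> a c v)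
        + sV \<delta> (Dop sV \<delta> \<theta> a b da db w)))"

text \<open>Its trilinear extension to all of T \<oplus> V (graded by (T0 \<times> V0, T1 \<times> V1)).\<close>
definition sd_prod ::
  "'a set \<Rightarrow> 'a set \<Rightarrow> ('k::field \<Rightarrow> 'v::ab_group_add \<Rightarrow> 'v) \<Rightarrow> 'v set \<Rightarrow> 'v set \<Rightarrow> 'k
   \<Rightarrow> ('a::ab_group_add \<Rightarrow> 'a \<Rightarrow> 'a \<Rightarrow> 'a) \<Rightarrow> ('a \<Rightarrow> 'a \<Rightarrow> 'v \<Rightarrow> 'v)
   \<Rightarrow> 'a \<times> 'v \<Rightarrow> 'a \<times> 'v \<Rightarrow> 'a \<times> 'v \<Rightarrow> 'a \<times> 'v" where
  "sd_prod A0 A1 sV V0 V1 \<delta> p \<theta> x y z =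
     (\<Sum>i\<in>{0::nat, 1}. \<Sum>j\<in>{0::nat, 1}. \<Sum>k\<in>{0::nat, 1}.
        sd_hom sV \<delta> p \<theta> (gproj (A0 \<times> V0) (A1 \<times> V1) i x) (gproj (A0 \<times> V0) (A1 \<times> V1) j y)
          (gproj (A0 \<times> V0) (A1 \<times> V1) k z) i j k)"

end

theory Submission
  imports Defs
begin

(* The T-component of the product is the product of T, so the T-component of each axiom is
   the axiom of T. The V-component of the product is linear in the V-entries, and each of its
   terms contains exactly one of them; hence the V-component of each axiom can be checked entry
   by entry. For skew-symmetry and the cyclic identity this holds by the definition of D alone,
   for the fundamental identity the coefficient identities are instances of (R1)-(R3). Both
   sides of every axiom are trilinear, so it suffices to check homogeneous elements, on which
   sd_prod reduces to sd_hom. *)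

lemma Gr_cong: "even i = even j \<Longrightarrow> Gr A0 A1 i = Gr A0 A1 j"
  by (simp add: Gr_def)

lemma Gr_Times: "Gr (A0 \<times> B0) (A1 \<times> B1) d = Gr A0 A1 d \<times> Gr B0 B1 d"
  by (simp add: Gr_def)

context
  fixes s :: "'k::field \<Rightarrow> 'a::ab_group_add \<Rightarrow> 'a" and A0 A1 :: "'a set"
  assumes graded: "graded_space s A0 A1"
begin

lemma graded_space_vector_space: "vector_space s"
  using graded by (simp add: graded_space_def)

interpretation vector_space s
  by (rule graded_space_vector_space)

lemma graded_space_subspace_Gr: "subspace (Gr A0 A1 i)"
  using graded by (simp add: graded_space_def Gr_def)

lemma graded_space_inter: "A0 \<inter> A1 = {0}"
proof -
  have unique: "\<exists>!q. fst q \<in> A0 \<and> snd q \<in> A1 \<and> x = fst q + snd q" for x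
    using graded by (simp add: graded_space_def)
  have zero: "0 \<in> A0" "0 \<in> A1"
    using graded subspace_0 by (auto simp: graded_space_def)
  have "x = 0" if "x \<in> A0" "x \<in> A1" for x
  proof -
    have "(x, 0) = (0, x)"
      using unique[of x] that zero by (metis add.right_neutral add_0 fst_conv snd_conv)
    then show ?thesis by simp
  qed
  then show ?thesis using zero by blast
qed

lemma graded_space_Gr_inter_Suc: "Gr A0 A1 i \<inter> Gr A0 A1 (Suc i) = {0}"
  using graded_space_inter by (auto simp: Gr_def)

lemma gproj_unique:
  assumes y: "y \<in> Gr A0 A1 i" and xy: "x - y \<in> Gr A0 A1 (Suc i)"
  shows "gproj A0 A1 i x = y"
  unfolding gproj_def
proof (rule the_equality)
  show "y \<in> Gr A0 A1 i \<and> x - y \<in> Gr A0 A1 (Suc i)"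
    using y xy by simp
next
  fix y' assume y': "y' \<in> Gr A0 A1 i \<and> x - y' \<in> Gr A0 A1 (Suc i)"
  have "y' - y \<in> Gr A0 A1 i"
    using y y' subspace_diff[OF graded_space_subspace_Gr] by blast
  moreover have "y' - y = (x - y) - (x - y')"
    by simp
  then have "y' - y \<in> Gr A0 A1 (Suc i)"
    using xy y' subspace_diff[OF graded_space_subspace_Gr] by metis
  ultimately have "y' - y = 0"
    using graded_space_Gr_inter_Suc by blast
  then show "y' = y"
    by simp
qed

lemma gproj_mem: "gproj A0 A1 i x \<in> Gr A0 A1 i" "x - gproj A0 A1 i x \<in> Gr A0 A1 (Suc i)"
proof -
  obtain q where q: "fst q \<in> A0" "snd q \<in> A1" "x = fst q + snd q"
    using graded unfolding graded_space_def by blast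
  then have "gproj A0 A1 i x = (if even i then fst q else snd q)"
    by (intro gproj_unique) (auto simp: Gr_def)
  with q show "gproj A0 A1 i x \<in> Gr A0 A1 i" "x - gproj A0 A1 i x \<in> Gr A0 A1 (Suc i)"
    by (auto simp: Gr_def)
qed

lemma gproj_add: "gproj A0 A1 i (x + y) = gproj A0 A1 i x + gproj A0 A1 i y"
proof (rule gproj_unique)
  show "gproj A0 A1 i x + gproj A0 A1 i y \<in> Gr A0 A1 i"
    using gproj_mem subspace_add[OF graded_space_subspace_Gr] by blast
  have "x + y - (gproj A0 A1 i x + gproj A0 A1 i y) = (x - gproj A0 A1 i x) + (y - gproj A0 A1 i y)"
    by simp
  then show "x + y - (gproj A0 A1 i x + gproj A0 A1 i y) \<in> Gr A0 A1 (Suc i)"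
    using gproj_mem subspace_add[OF graded_space_subspace_Gr] by metis
qed

lemma gproj_scale: "gproj A0 A1 i (s c x) = s c (gproj A0 A1 i x)"
proof (rule gproj_unique)
  show "s c (gproj A0 A1 i x) \<in> Gr A0 A1 i"
    using gproj_mem subspace_scale[OF graded_space_subspace_Gr] by blast
  have "s c x - s c (gproj A0 A1 i x) = s c (x - gproj A0 A1 i x)"
    by (simp add: scale_right_diff_distrib)
  then show "s c x - s c (gproj A0 A1 i x) \<in> Gr A0 A1 (Suc i)"
    using gproj_mem subspace_scale[OF graded_space_subspace_Gr] by metis
qed

lemma gproj_homogeneous:
  assumes "x \<in> Gr A0 A1 d"
  shows "gproj A0 A1 i x = (if even i = even d then x else 0)"
proof (rule gproj_unique)
  have "0 \<in> Gr A0 A1 j" for j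
    using subspace_0[OF graded_space_subspace_Gr] .
  then show "(if even i = even d then x else 0) \<in> Gr A0 A1 i"
    and "x - (if even i = even d then x else 0) \<in> Gr A0 A1 (Suc i)"
    using assms Gr_cong[of i d A0 A1] Gr_cong[of "Suc i" d A0 A1] by auto
qed

end

lemma graded_spaceI:
  fixes s :: "'k::field \<Rightarrow> 'a::ab_group_add \<Rightarrow> 'a"
  assumes vs: "vector_space s" and sub: "module.subspace s A0" "module.subspace s A1"
    and decomposition: "\<And>x. \<exists>y\<in>A0. \<exists>z\<in>A1. x = y + z" and inter: "A0 \<inter> A1 \<subseteq> {0}"
  shows "graded_space s A0 A1"
proof -
  interpret vector_space s by (rule vs)
  have "q = q'" if "fst q \<in> A0" "snd q \<in> A1" "fst q' \<in> A0" "snd q' \<in> A1"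
    and "fst q + snd q = fst q' + snd q'" for q q' :: "'a \<times> 'a"
  proof -
    have "fst q - fst q' = snd q' - snd q"
      using that(5) by (simp add: algebra_simps)
    moreover have "fst q - fst q' \<in> A0" "snd q' - snd q \<in> A1"
      using that(1-4) subspace_diff[OF sub(1)] subspace_diff[OF sub(2)] by auto
    ultimately show "q = q'"
      using inter by (auto simp: prod_eq_iff)
  qed
  then have "\<exists>!q. fst q \<in> A0 \<and> snd q \<in> A1 \<and> x = fst q + snd q" for x
    using decomposition[of x] by (metis fst_conv snd_conv)
  then show ?thesis
    unfolding graded_space_def using vs sub by blast
qed

lemma vector_space_prod_scale:
  assumes "vector_space s" "vector_space sV"
  shows "vector_space (prod_scale s sV)"
proof -
  interpret A: vector_space s by fact
  interpret B: vector_space sV by fact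
  show ?thesis
    by unfold_locales
      (simp_all add: prod_scale_def A.scale_right_distrib B.scale_right_distrib
        A.scale_left_distrib B.scale_left_distrib)
qed

lemma subspace_Times:
  assumes "vector_space s" "vector_space sV" "module.subspace s C" "module.subspace sV D"
  shows "module.subspace (prod_scale s sV) (C \<times> D)"
proof -
  interpret A: vector_space s by fact
  interpret B: vector_space sV by fact
  interpret P: vector_space "prod_scale s sV"
    using assms(1,2) by (rule vector_space_prod_scale)
  show ?thesis
    using assms(3,4) unfolding A.subspace_def B.subspace_def P.subspace_def
    by (simp add: prod_scale_def zero_prod_def mem_Times_iff)
qed

lemma graded_space_prod_scale:
  assumes A: "graded_space s A0 A1" and B: "graded_space sV B0 B1"
  shows "graded_space (prod_scale s sV) (A0 \<times> B0) (A1 \<times> B1)"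
proof (rule graded_spaceI)
  note vs = graded_space_vector_space[OF A] graded_space_vector_space[OF B]
  show "vector_space (prod_scale s sV)"
    using vs by (rule vector_space_prod_scale)
  show "module.subspace (prod_scale s sV) (A0 \<times> B0)" "module.subspace (prod_scale s sV) (A1 \<times> B1)"
    using A B by (simp_all add: graded_space_def subspace_Times[OF vs])
  show "\<exists>y\<in>A0 \<times> B0. \<exists>z\<in>A1 \<times> B1. x = y + z" for x
  proof -
    obtain a0 a1 where "a0 \<in> A0" "a1 \<in> A1" "fst x = a0 + a1"
      using A unfolding graded_space_def by blast
    moreover obtain b0 b1 where "b0 \<in> B0" "b1 \<in> B1" "snd x = b0 + b1"
      using B unfolding graded_space_def by blast
    ultimately show ?thesis
      by (intro bexI[of _ "(a0, b0)"] bexI[of _ "(a1, b1)"]) (auto simp: prod_eq_iff)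
  qed
  show "(A0 \<times> B0) \<inter> (A1 \<times> B1) \<subseteq> {0}"
    using graded_space_inter[OF A] graded_space_inter[OF B] by (auto simp: zero_prod_def)
qed

locale jlsts_representation =
  fixes s :: "'k::field \<Rightarrow> 'a::ab_group_add \<Rightarrow> 'a" and sV :: "'k \<Rightarrow> 'v::ab_group_add \<Rightarrow> 'v"
    and p :: "'a \<Rightarrow> 'a \<Rightarrow> 'a \<Rightarrow> 'a" and \<theta> :: "'a \<Rightarrow> 'a \<Rightarrow> 'v \<Rightarrow> 'v"
    and T0 T1 :: "'a set" and V0 V1 :: "'v set" and \<delta> :: 'k
  assumes jlsts: "JLSTS s T0 T1 \<delta> p"
    and representation: "jl_representation s T0 T1 \<delta> p sV V0 V1 \<theta>"
begin

abbreviation "scaleTV \<equiv> prod_scale s sV"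
abbreviation "bracket_hom \<equiv> sd_hom sV \<delta> p \<theta>"
abbreviation "bracket \<equiv> sd_prod T0 T1 sV V0 V1 \<delta> p \<theta>"
abbreviation "GrTV \<equiv> Gr (T0 \<times> V0) (T1 \<times> V1)"

lemma graded_T: "graded_space s T0 T1"
  using jlsts by (simp add: JLSTS_def)

lemma graded_V: "graded_space sV V0 V1"
  using representation by (simp add: jl_representation_def)

lemma graded_TV: "graded_space scaleTV (T0 \<times> V0) (T1 \<times> V1)"
  using graded_T graded_V by (rule graded_space_prod_scale)

lemma delta_cases: "\<delta> = 1 \<or> \<delta> = -1"
  using jlsts by (simp add: JLSTS_def)

lemma delta_square: "\<delta> * \<delta> = 1" "\<delta> * (\<delta> * k) = k"
  using delta_cases by auto

end

sublocale jlsts_representation \<subseteq> T: vector_space s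
  by (rule graded_space_vector_space[OF graded_T])

sublocale jlsts_representation \<subseteq> V: vector_space sV
  by (rule graded_space_vector_space[OF graded_V])

sublocale jlsts_representation \<subseteq> TV: vector_space "prod_scale s sV"
  by (rule graded_space_vector_space[OF graded_TV])

context jlsts_representation
begin

lemma triple_module_hom:
  "module_hom s s (\<lambda>a. p a b c)" "module_hom s s (\<lambda>b. p a b c)" "module_hom s s (p a b)"
  using jlsts unfolding JLSTS_def trilinear_def by (simp_all add: module_hom_iff_linear)

lemmas triple_linear = triple_module_hom[THEN module_hom.add] triple_module_hom[THEN module_hom.scale]
  triple_module_hom[THEN module_hom.zero]

lemma theta_module_hom:
  "module_hom s sV (\<lambda>a. \<theta> a b u)" "module_hom s sV (\<lambda>b. \<theta> a b u)" "module_hom sV sV (\<theta> a b)"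
  using representation unfolding jl_representation_def by (simp_all add: module_hom_iff_linear)

lemmas theta_linear = theta_module_hom[THEN module_hom.add] theta_module_hom[THEN module_hom.scale]
  theta_module_hom[THEN module_hom.zero] theta_module_hom(3)[THEN module_hom.neg]
  theta_module_hom(3)[THEN module_hom.diff]

lemma Dop_linear:
  "Dop sV \<delta> \<theta> a b da db (u + u') = Dop sV \<delta> \<theta> a b da db u + Dop sV \<delta> \<theta> a b da db u'"
  "Dop sV \<delta> \<theta> a b da db (u - u') = Dop sV \<delta> \<theta> a b da db u - Dop sV \<delta> \<theta> a b da db u'"
  "Dop sV \<delta> \<theta> a b da db (- u) = - Dop sV \<delta> \<theta> a b da db u"
  "Dop sV \<delta> \<theta> a b da db (sV k u) = sV k (Dop sV \<delta> \<theta> a b da db u)"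
  "Dop sV \<delta> \<theta> a b da db 0 = 0"
  by (simp_all add: Dop_def theta_linear algebra_simps)

lemma triple_Gr: "p a b c \<in> Gr T0 T1 (da + db + dc)"
  and triple_skew: "p b a c = s (- \<delta> * (-1) ^ (da * db)) (p a b c)"
  and triple_cyclic: "s ((-1) ^ (da * dc)) (p a b c) + s ((-1) ^ (db * da)) (p b c a)
      + s ((-1) ^ (dc * db)) (p c a b) = 0"
  if "a \<in> Gr T0 T1 da" "b \<in> Gr T0 T1 db" "c \<in> Gr T0 T1 dc"
  using jlsts that unfolding JLSTS_def by blast+

lemma triple_fundamental:
  assumes "a \<in> Gr T0 T1 da" "b \<in> Gr T0 T1 db" "c \<in> Gr T0 T1 dc" "d \<in> Gr T0 T1 dd"
    "e \<in> Gr T0 T1 de"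
  shows "p a b (p c d e) = p (p a b c) d e + s ((-1) ^ (dc * (da + db))) (p c (p a b d) e)
    + s (\<delta> * (-1) ^ ((da + db) * (dc + dd))) (p c d (p a b e))"
  using jlsts assms unfolding JLSTS_def by blast

lemma theta_Gr:
  "a \<in> Gr T0 T1 da \<Longrightarrow> b \<in> Gr T0 T1 db \<Longrightarrow> u \<in> Gr V0 V1 du \<Longrightarrow> even (da + db + du) = even n
    \<Longrightarrow> \<theta> a b u \<in> Gr V0 V1 n"
  using representation Gr_cong[of "da + db + du" n V0 V1] unfolding jl_representation_def by metis

lemma theta_triple_right:
  assumes "a \<in> Gr T0 T1 da" "b \<in> Gr T0 T1 db" "c \<in> Gr T0 T1 dc" "d \<in> Gr T0 T1 dd"
  shows "\<theta> a (p b c d) u = sV ((-1) ^ ((da + db) * (dc + dd))) (\<theta> c d (\<theta> a b u))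
    - sV (\<delta> * (-1) ^ (da * db + dd * (dc + da))) (\<theta> b d (\<theta> a c u))
    + sV ((-1) ^ (da * (db + dc))) (Dop sV \<delta> \<theta> b c db dc (\<theta> a d u))"
proof -
  have "sV ((-1) ^ ((da + db) * (dc + dd))) (\<theta> c d (\<theta> a b u))
    - sV (\<delta> * (-1) ^ (da * db + dd * (dc + da))) (\<theta> b d (\<theta> a c u))
    - \<theta> a (p b c d) u + sV ((-1) ^ (da * (db + dc))) (Dop sV \<delta> \<theta> b c db dc (\<theta> a d u)) = 0"
    using representation assms unfolding jl_representation_def by blast
  then show ?thesis
    by (simp add: algebra_simps)
qed

lemma theta_triple_left:
  assumes "a \<in> Gr T0 T1 da" "b \<in> Gr T0 T1 db" "c \<in> Gr T0 T1 dc" "d \<in> Gr T0 T1 dd"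
  shows "\<theta> (p a b c) d u = sV \<delta> (Dop sV \<delta> \<theta> a b da db (\<theta> c d u))
    - sV (\<delta> * (-1) ^ ((da + db) * (dc + dd))) (\<theta> c d (Dop sV \<delta> \<theta> a b da db u))
    - sV (\<delta> * (-1) ^ (dc * (da + db))) (\<theta> c (p a b d) u)"
proof -
  have "sV (\<delta> * (-1) ^ ((da + db) * (dc + dd))) (\<theta> c d (Dop sV \<delta> \<theta> a b da db u))
    - sV \<delta> (Dop sV \<delta> \<theta> a b da db (\<theta> c d u)) + \<theta> (p a b c) d u
    + sV (\<delta> * (-1) ^ (dc * (da + db))) (\<theta> c (p a b d) u) = 0"
    using representation assms unfolding jl_representation_def by blast
  then show ?thesis
    by (simp add: algebra_simps)
qed

lemma Dop_triple_left:
  assumes "a \<in> Gr T0 T1 da" "b \<in> Gr T0 T1 db" "c \<in> Gr T0 T1 dc" "d \<in> Gr T0 T1 dd"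
  shows "Dop sV \<delta> \<theta> (p a b c) d (da + db + dc) dd u
    = sV \<delta> (Dop sV \<delta> \<theta> a b da db (Dop sV \<delta> \<theta> c d dc dd u))
    - sV ((-1) ^ (dc * (da + db))) (Dop sV \<delta> \<theta> c (p a b d) dc (da + db + dd) u)
    - sV ((-1) ^ ((da + db) * (dc + dd))) (Dop sV \<delta> \<theta> c d dc dd (Dop sV \<delta> \<theta> a b da db u))"
proof -
  have "Dop sV \<delta> \<theta> (p a b c) d (da + db + dc) dd u
    + sV ((-1) ^ (dc * (da + db))) (Dop sV \<delta> \<theta> c (p a b d) dc (da + db + dd) u)
    - sV \<delta> (Dop sV \<delta> \<theta> a b da db (Dop sV \<delta> \<theta> c d dc dd u))
    + sV ((-1) ^ ((da + db) * (dc + dd))) (Dop sV \<delta> \<theta> c d dc dd (Dop sV \<delta> \<theta> a b da db u)) = 0"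
    using representation assms unfolding jl_representation_def by blast
  then show ?thesis
    by (simp add: algebra_simps)
qed

lemma bracket_hom_add:
  "bracket_hom (X + X') Y Z i j k = bracket_hom X Y Z i j k + bracket_hom X' Y Z i j k"
  "bracket_hom X (Y + Y') Z i j k = bracket_hom X Y Z i j k + bracket_hom X Y' Z i j k"
  "bracket_hom X Y (Z + Z') i j k = bracket_hom X Y Z i j k + bracket_hom X Y Z' i j k"
  by (cases X; cases X'; cases Y; cases Y'; cases Z; cases Z';
      simp add: sd_hom_def Dop_def triple_linear theta_linear algebra_simps)+

lemma bracket_hom_scale:
  "bracket_hom (scaleTV r X) Y Z i j k = scaleTV r (bracket_hom X Y Z i j k)"
  "bracket_hom X (scaleTV r Y) Z i j k = scaleTV r (bracket_hom X Y Z i j k)"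
  "bracket_hom X Y (scaleTV r Z) i j k = scaleTV r (bracket_hom X Y Z i j k)"
  by (cases X; cases Y; cases Z;
      simp add: sd_hom_def Dop_def prod_scale_def triple_linear theta_linear algebra_simps)+

lemma bracket_hom_zero:
  "bracket_hom 0 Y Z i j k = 0" "bracket_hom X 0 Z i j k = 0" "bracket_hom X Y 0 i j k = 0"
  by (cases X; cases Y; cases Z; simp add: sd_hom_def Dop_def triple_linear theta_linear zero_prod_def)+

lemma bracket_hom_parity_cong:
  "even i = even i' \<Longrightarrow> even j = even j' \<Longrightarrow> even k = even k'
    \<Longrightarrow> bracket_hom X Y Z i j k = bracket_hom X Y Z i' j' k'"
  by (cases X; cases Y; cases Z; cases "even i"; cases "even j"; cases "even k")
     (simp_all add: sd_hom_def Dop_def minus_one_power_iff)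

lemma bracket_homogeneous:
  assumes "X \<in> GrTV dx" "Y \<in> GrTV dy" "Z \<in> GrTV dz"
  shows "bracket X Y Z = bracket_hom X Y Z dx dy dz"
proof -
  note components = gproj_homogeneous[OF graded_TV assms(1)] gproj_homogeneous[OF graded_TV assms(2)]
    gproj_homogeneous[OF graded_TV assms(3)]
  let ?parity = "\<lambda>n. if even n then 0 else 1 :: nat"
  have "bracket X Y Z = bracket_hom X Y Z (?parity dx) (?parity dy) (?parity dz)"
    unfolding sd_prod_def components
    by (cases "even dx"; cases "even dy"; cases "even dz") (simp_all add: bracket_hom_zero)
  also have "\<dots> = bracket_hom X Y Z dx dy dz"
    by (rule bracket_hom_parity_cong) auto
  finally show ?thesis .
qed

lemma bracket_linear:
  "Vector_Spaces.linear scaleTV scaleTV (\<lambda>X. bracket X Y Z)"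
  "Vector_Spaces.linear scaleTV scaleTV (\<lambda>Y. bracket X Y Z)"
  "Vector_Spaces.linear scaleTV scaleTV (\<lambda>Z. bracket X Y Z)"
  unfolding Vector_Spaces.linear_iff
  by (simp_all add: TV.vector_space_axioms sd_prod_def gproj_add[OF graded_TV] gproj_scale[OF graded_TV]
      bracket_hom_add bracket_hom_scale sum.distrib TV.scale_sum_right TV.scale_right_distrib)

lemma bracket_hom_Gr:
  assumes "a \<in> Gr T0 T1 da" "b \<in> Gr T0 T1 db" "c \<in> Gr T0 T1 dc"
    and "u \<in> Gr V0 V1 da" "v \<in> Gr V0 V1 db" "w \<in> Gr V0 V1 dc"
  shows "bracket_hom (a, u) (b, v) (c, w) da db dc \<in> GrTV (da + db + dc)"
proof -
  note V_sub = graded_space_subspace_Gr[OF graded_V]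
  have "\<theta> b c u \<in> Gr V0 V1 (da + db + dc)" "\<theta> a c v \<in> Gr V0 V1 (da + db + dc)"
    "\<theta> b a w \<in> Gr V0 V1 (da + db + dc)" "\<theta> a b w \<in> Gr V0 V1 (da + db + dc)"
    using assms by (auto intro!: theta_Gr simp: ac_simps)
  then show ?thesis
    using triple_Gr[OF assms(1-3)]
    by (simp add: Gr_Times sd_hom_def Dop_def V.subspace_add[OF V_sub] V.subspace_diff[OF V_sub]
        V.subspace_scale[OF V_sub])
qed

lemma bracket_hom_skew:
  assumes "a \<in> Gr T0 T1 da" "b \<in> Gr T0 T1 db" "c \<in> Gr T0 T1 dc"
  shows "bracket_hom (b, v) (a, u) (c, w) db da dc
    = scaleTV (- \<delta> * (-1) ^ (da * db)) (bracket_hom (a, u) (b, v) (c, w) da db dc)"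
    (is "?l = ?r")
proof (rule prod_eqI)
  show "fst ?l = fst ?r"
    using triple_skew[OF assms] by (simp add: sd_hom_def prod_scale_def)
  show "snd ?l = snd ?r"
    using delta_cases
    by (elim disjE; cases "even da"; cases "even db"; cases "even dc")
       (simp_all add: sd_hom_def Dop_def prod_scale_def minus_one_power_iff theta_linear algebra_simps)
qed

lemma bracket_hom_cyclic:
  assumes "a \<in> Gr T0 T1 da" "b \<in> Gr T0 T1 db" "c \<in> Gr T0 T1 dc"
  shows "scaleTV ((-1) ^ (da * dc)) (bracket_hom (a, u) (b, v) (c, w) da db dc)
    + scaleTV ((-1) ^ (db * da)) (bracket_hom (b, v) (c, w) (a, u) db dc da)
    + scaleTV ((-1) ^ (dc * db)) (bracket_hom (c, w) (a, u) (b, v) dc da db) = 0"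
    (is "?l = 0")
proof (rule prod_eqI)
  show "fst ?l = fst 0"
    using triple_cyclic[OF assms] by (simp add: sd_hom_def prod_scale_def)
  show "snd ?l = snd 0"
    using delta_cases
    by (elim disjE; cases "even da"; cases "even db"; cases "even dc")
       (simp_all add: sd_hom_def Dop_def prod_scale_def minus_one_power_iff theta_linear algebra_simps)
qed

lemma bracket_hom_fundamental:
  assumes a: "a \<in> Gr T0 T1 da" and b: "b \<in> Gr T0 T1 db" and c: "c \<in> Gr T0 T1 dc"
    and d: "d \<in> Gr T0 T1 dd" and e: "e \<in> Gr T0 T1 de"
  shows "bracket_hom (a, u) (b, v) (bracket_hom (c, w) (d, x) (e, y) dc dd de) da db (dc + dd + de)
    = bracket_hom (bracket_hom (a, u) (b, v) (c, w) da db dc) (d, x) (e, y) (da + db + dc) dd de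
    + scaleTV ((-1) ^ (dc * (da + db)))
        (bracket_hom (c, w) (bracket_hom (a, u) (b, v) (d, x) da db dd) (e, y) dc (da + db + dd) de)
    + scaleTV (\<delta> * (-1) ^ ((da + db) * (dc + dd)))
        (bracket_hom (c, w) (d, x) (bracket_hom (a, u) (b, v) (e, y) da db de) dc dd (da + db + de))"
    (is "?l = ?r")
proof (rule prod_eqI)
  show "fst ?l = fst ?r"
    using triple_fundamental[OF a b c d e] by (simp add: sd_hom_def prod_scale_def)
  (* The coefficients of u, v, w, x, y on the two sides agree by (R1) for (b,c,d,e), (R1) for
     (a,c,d,e), (R2) for (a,b,d,e), (R2) for (a,b,c,e) and (R3) for (a,b,c,d), respectively. *)
  show "snd ?l = snd ?r"
    by (cases "even da"; cases "even db"; cases "even dc"; cases "even dd"; cases "even de";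
        simp add: sd_hom_def prod_scale_def minus_one_power_iff theta_linear Dop_linear delta_square
          theta_triple_right[OF b c d e, of u] theta_triple_right[OF a c d e, of v]
          theta_triple_left[OF a b d e, of w] theta_triple_left[OF a b c e, of x]
          Dop_triple_left[OF a b c d, of y];
        simp add: algebra_simps delta_square)
qed

lemma GrTV_cases:
  assumes "X \<in> GrTV d"
  obtains a u where "X = (a, u)" "a \<in> Gr T0 T1 d" "u \<in> Gr V0 V1 d"
  using assms by (cases X) (simp add: Gr_Times)

lemma bracket_Gr:
  assumes "X \<in> GrTV da" "Y \<in> GrTV db" "Z \<in> GrTV dc"
  shows "bracket X Y Z \<in> GrTV (da + db + dc)"
proof -
  obtain a u where X: "X = (a, u)" "a \<in> Gr T0 T1 da" "u \<in> Gr V0 V1 da"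
    using assms(1) by (rule GrTV_cases)
  obtain b v where Y: "Y = (b, v)" "b \<in> Gr T0 T1 db" "v \<in> Gr V0 V1 db"
    using assms(2) by (rule GrTV_cases)
  obtain c w where Z: "Z = (c, w)" "c \<in> Gr T0 T1 dc" "w \<in> Gr V0 V1 dc"
    using assms(3) by (rule GrTV_cases)
  show ?thesis
    unfolding bracket_homogeneous[OF assms]
    unfolding X(1) Y(1) Z(1)
    using X(2) Y(2) Z(2) X(3) Y(3) Z(3) by (rule bracket_hom_Gr)
qed

lemma bracket_skew:
  assumes "X \<in> GrTV da" "Y \<in> GrTV db" "Z \<in> GrTV dc"
  shows "bracket Y X Z = scaleTV (- \<delta> * (-1) ^ (da * db)) (bracket X Y Z)"
proof -
  obtain a u where X: "X = (a, u)" "a \<in> Gr T0 T1 da"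
    using assms(1) by (rule GrTV_cases)
  obtain b v where Y: "Y = (b, v)" "b \<in> Gr T0 T1 db"
    using assms(2) by (rule GrTV_cases)
  obtain c w where Z: "Z = (c, w)" "c \<in> Gr T0 T1 dc"
    using assms(3) by (rule GrTV_cases)
  show ?thesis
    unfolding bracket_homogeneous[OF assms(2,1,3)] bracket_homogeneous[OF assms]
    unfolding X(1) Y(1) Z(1)
    using X(2) Y(2) Z(2) by (rule bracket_hom_skew)
qed

lemma bracket_cyclic:
  assumes "X \<in> GrTV da" "Y \<in> GrTV db" "Z \<in> GrTV dc"
  shows "scaleTV ((-1) ^ (da * dc)) (bracket X Y Z) + scaleTV ((-1) ^ (db * da)) (bracket Y Z X)
    + scaleTV ((-1) ^ (dc * db)) (bracket Z X Y) = 0"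
proof -
  obtain a u where X: "X = (a, u)" "a \<in> Gr T0 T1 da"
    using assms(1) by (rule GrTV_cases)
  obtain b v where Y: "Y = (b, v)" "b \<in> Gr T0 T1 db"
    using assms(2) by (rule GrTV_cases)
  obtain c w where Z: "Z = (c, w)" "c \<in> Gr T0 T1 dc"
    using assms(3) by (rule GrTV_cases)
  show ?thesis
    unfolding bracket_homogeneous[OF assms] bracket_homogeneous[OF assms(2,3,1)]
      bracket_homogeneous[OF assms(3,1,2)]
    unfolding X(1) Y(1) Z(1)
    using X(2) Y(2) Z(2) by (rule bracket_hom_cyclic)
qed

lemma bracket_fundamental:
  assumes X1: "X1 \<in> GrTV da" and X2: "X2 \<in> GrTV db" and X3: "X3 \<in> GrTV dc"
    and X4: "X4 \<in> GrTV dd" and X5: "X5 \<in> GrTV de"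
  shows "bracket X1 X2 (bracket X3 X4 X5) = bracket (bracket X1 X2 X3) X4 X5
    + scaleTV ((-1) ^ (dc * (da + db))) (bracket X3 (bracket X1 X2 X4) X5)
    + scaleTV (\<delta> * (-1) ^ ((da + db) * (dc + dd))) (bracket X3 X4 (bracket X1 X2 X5))"
proof -
  obtain a u where A: "X1 = (a, u)" "a \<in> Gr T0 T1 da"
    using X1 by (rule GrTV_cases)
  obtain b v where B: "X2 = (b, v)" "b \<in> Gr T0 T1 db"
    using X2 by (rule GrTV_cases)
  obtain c w where C: "X3 = (c, w)" "c \<in> Gr T0 T1 dc"
    using X3 by (rule GrTV_cases)
  obtain d x where D: "X4 = (d, x)" "d \<in> Gr T0 T1 dd"
    using X4 by (rule GrTV_cases)
  obtain e y where E: "X5 = (e, y)" "e \<in> Gr T0 T1 de"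
    using X5 by (rule GrTV_cases)
  note outer = bracket_homogeneous[OF X1 X2 bracket_Gr[OF X3 X4 X5]]
    bracket_homogeneous[OF bracket_Gr[OF X1 X2 X3] X4 X5]
    bracket_homogeneous[OF X3 bracket_Gr[OF X1 X2 X4] X5]
    bracket_homogeneous[OF X3 X4 bracket_Gr[OF X1 X2 X5]]
  note inner = bracket_homogeneous[OF X3 X4 X5] bracket_homogeneous[OF X1 X2 X3]
    bracket_homogeneous[OF X1 X2 X4] bracket_homogeneous[OF X1 X2 X5]
  show ?thesis
    unfolding outer unfolding inner unfolding A(1) B(1) C(1) D(1) E(1)
    using A(2) B(2) C(2) D(2) E(2) by (rule bracket_hom_fundamental)
qed

theorem JLSTS_bracket: "JLSTS scaleTV (T0 \<times> V0) (T1 \<times> V1) \<delta> bracket"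
  unfolding JLSTS_def trilinear_def
  by (intro conjI allI impI graded_TV delta_cases bracket_linear bracket_Gr bracket_skew bracket_cyclic
      bracket_fundamental)

end

theorem proposition3p3:
  fixes s :: "'k::field \<Rightarrow> 'a::ab_group_add \<Rightarrow> 'a"
    and sV :: "'k \<Rightarrow> 'v::ab_group_add \<Rightarrow> 'v"
    and p :: "'a \<Rightarrow> 'a \<Rightarrow> 'a \<Rightarrow> 'a"
    and \<theta> :: "'a \<Rightarrow> 'a \<Rightarrow> 'v \<Rightarrow> 'v"
  assumes "JLSTS s T0 T1 \<delta> p"
    and "jl_representation s T0 T1 \<delta> p sV V0 V1 \<theta>"
  shows "JLSTS (prod_scale s sV) (T0 \<times> V0) (T1 \<times> V1) \<delta> (sd_prod T0 T1 sV V0 V1 \<delta> p \<theta>)"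
proof -
  interpret jlsts_representation s sV p \<theta> T0 T1 V0 V1 \<delta>
    using assms by unfold_locales
  show ?thesis
    by (rule JLSTS_bracket)
qed

end
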